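(* For any sign string and state string, the web produced by the growth algorithm is non-elliptic, i.e. it contains no closed loops and every internal face has at least six sides.
   Context: A sign string is $S=(s_1,\dots,s_n)\in\{+,-\}^n$ and a state string is $J=(j_1,\dots,j_n)\in\{-1,0,1\}^n$. The growth algorithm builds an oriented planar graph downward from $n$ parallel strands (the $k$-th strand oriented upward toward its top endpoint if $s_k=+$ and downward if $s_k=-$), keeping a current pair (sign string, state string) describing the strands hanging at the bottom. A replacement acts on two adjacent positions $k,k+1$ with current signs $(s,s')$ and states $(j,j')$: (a) If $s'\ne s$: if $(j,j')=(1,0)$, $(0,0)$ or $(0,-1)$, attach an "H" (two trivalent vertices joined by a horizontal edge, the left vertex joined to strand $k$ above and to a new strand below, the right vertex likewise for strand $k+1$); the new signs at positions $k,k+1$ are $(s',s)$ and the new states are respectively $(0,1)$, $(-1,1)$, $(-1,0)$. If $(j,j')=(1,-1)$, join the two strands by a cup and delete both positions. (b) If $s'=s$: if $(j,j')=(1,0)$, $(0,-1)$ or $(1,-1)$, attach a "Y" (the two strands meet at a trivalent vertex whose third edge continues downward as a single strand); the two positions are replaced by one position with sign opposite to $s$ and state respectively $1$, $-1$, $0$. The algorithm repeatedly applies some applicable replacement and stops when none applies. An internal face of the resulting graph is a bounded complementary region not touching the top line of endpoints or the strands left hanging at the bottom. *)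

theory Defs
  imports Main
begin

text \<open>Vertices of the produced web (drawn in a rectangle/disk):
  Top i   -- the i-th top endpoint (0-indexed, left to right),
  Bot i   -- the endpoint of the i-th strand left hanging at the bottom,
  Tri m   -- a trivalent vertex (created by an H or a Y),
  Cp m    -- the bottom point of a cup (a bivalent point, not a web vertex;
             it only serves to make cups representable as a pair of segments).
  A dart is a pair (vertex, slot); slots are numbered in counterclockwise order
  around the vertex, which gives the planar embedding as a rotation system.\<close>

datatype vtx = Top nat | Bot nat | Tri nat | Cp nat

type_synonym dart = "vtx \<times> nat"

text \<open>Algorithm state: the list of hanging strands (sign, state, upper dart from
  which the strand hangs), a counter for fresh vertex names, and the edges built so
  far (pairs of darts).  Sign True means +.\<close>

type_synonym gstate = "(bool \<times> int \<times> dart) list \<times> nat \<times> (dart \<times> dart) set"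

text \<open>Slot conventions (counterclockwise):
  H left vertex Tri c: 0 = up (strand k), 1 = down (new strand), 2 = right (horizontal edge);
  H right vertex Tri (c+1): 0 = up (strand k+1), 1 = left (horizontal edge), 2 = down;
  Y vertex Tri c: 0 = upper left (strand k), 1 = down, 2 = upper right (strand k+1);
  cup point Cp c: 0 = left (strand k), 1 = right (strand k+1);
  Top i: 0 = down (strand), 1 = boundary arc to the right, 2 = boundary arc to the left;
  Bot i: 0 = up (strand), 1 = boundary arc to the left, 2 = boundary arc to the right.\<close>

inductive grow_step :: "gstate \<Rightarrow> gstate \<Rightarrow> bool" where
  H: "\<lbrakk> Suc k < length L; L ! k = (s, j, d); L ! Suc k = (s', j', d'); s' \<noteq> s;
        ((j, j'), (nj, nj')) \<in> {((1, 0), (0, 1)), ((0, 0), (-1, 1)), ((0, -1), (-1, 0))} \<rbrakk>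
      \<Longrightarrow> grow_step (L, c, E)
            (take k L @ [(s', nj, (Tri c, 1)), (s, nj', (Tri (Suc c), 2))] @ drop (Suc (Suc k)) L,
             Suc (Suc c),
             E \<union> {(d, (Tri c, 0)), (d', (Tri (Suc c), 0)), ((Tri c, 2), (Tri (Suc c), 1))})"
| Cup: "\<lbrakk> Suc k < length L; L ! k = (s, 1, d); L ! Suc k = (s', -1, d'); s' \<noteq> s \<rbrakk>
      \<Longrightarrow> grow_step (L, c, E)
            (take k L @ drop (Suc (Suc k)) L, Suc c, E \<union> {(d, (Cp c, 0)), (d', (Cp c, 1))})"
| Y: "\<lbrakk> Suc k < length L; L ! k = (s, j, d); L ! Suc k = (s, j', d');
        ((j, j'), nj) \<in> {((1, 0), 1), ((0, -1), -1), ((1, -1), 0)} \<rbrakk>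
      \<Longrightarrow> grow_step (L, c, E)
            (take k L @ [(\<not> s, nj, (Tri c, 1))] @ drop (Suc (Suc k)) L,
             Suc c,
             E \<union> {(d, (Tri c, 0)), (d', (Tri c, 2))})"

definition grow_init :: "bool list \<Rightarrow> int list \<Rightarrow> gstate" where
  "grow_init S J = (map (\<lambda>i. (S ! i, J ! i, (Top i, 0))) [0..<length S], 0, {})"

definition grow_terminal :: "gstate \<Rightarrow> bool" where
  "grow_terminal st \<longleftrightarrow> \<not> (\<exists>st'. grow_step st st')"

text \<open>Boundary circle of the disk: top endpoints left to right, then down the right
  side, bottom endpoints right to left, then up the left side.\<close>

definition boundary_arcs :: "nat \<Rightarrow> nat \<Rightarrow> (dart \<times> dart) set" where
  "boundary_arcs n m =
     {((Top i, 1), (Top (Suc i), 2)) | i. Suc i < n}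
   \<union> {((Bot (Suc i), 1), (Bot i, 2)) | i. Suc i < m}
   \<union> (if 0 < m then {((Top (n - 1), 1), (Bot (m - 1), 2)), ((Bot 0, 1), (Top 0, 2))}
      else if 0 < n then {((Top (n - 1), 1), (Top 0, 2))} else {})"

definition final_web :: "nat \<Rightarrow> gstate \<Rightarrow> (dart \<times> dart) set" where
  "final_web n st = (case st of (L, c, E) \<Rightarrow>
     E \<union> {(snd (snd (L ! i)), (Bot i, 0)) | i. i < length L} \<union> boundary_arcs n (length L))"

definition web_darts :: "(dart \<times> dart) set \<Rightarrow> dart set" where
  "web_darts W = fst ` W \<union> snd ` W"

definition alpha :: "(dart \<times> dart) set \<Rightarrow> dart \<Rightarrow> dart" where
  "alpha W d = (THE e. (d, e) \<in> W \<or> (e, d) \<in> W)"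

fun rot :: "dart \<Rightarrow> dart" where
  "rot (Cp m, i) = (Cp m, (Suc i) mod 2)"
| "rot (v, i) = (v, (Suc i) mod 3)"

definition phi :: "(dart \<times> dart) set \<Rightarrow> dart \<Rightarrow> dart" where
  "phi W d = rot (alpha W d)"

text \<open>The face containing a dart: its orbit under the face permutation; each element
  of the orbit corresponds to one corner of the face.\<close>

definition face :: "(dart \<times> dart) set \<Rightarrow> dart \<Rightarrow> dart set" where
  "face W d = {(phi W ^^ k) d | k. True}"

fun is_tri :: "vtx \<Rightarrow> bool" where
  "is_tri (Tri _) = True"
| "is_tri _ = False"

fun is_cp :: "vtx \<Rightarrow> bool" where
  "is_cp (Cp _) = True"
| "is_cp _ = False"

text \<open>Internal face: has no corner at a top endpoint or a bottom endpoint (equivalently,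
  does not touch the boundary circle).\<close>

definition internal_face :: "dart set \<Rightarrow> bool" where
  "internal_face F \<longleftrightarrow> (\<forall>d\<in>F. is_tri (fst d) \<or> is_cp (fst d))"

text \<open>Number of sides = number of corners at (trivalent) web vertices; cup points are
  interior points of edges and do not count.\<close>

definition face_sides :: "dart set \<Rightarrow> nat" where
  "face_sides F = card {d \<in> F. is_tri (fst d)}"

definition web_adj :: "(dart \<times> dart) set \<Rightarrow> vtx \<Rightarrow> vtx \<Rightarrow> bool" where
  "web_adj W v w \<longleftrightarrow> (\<exists>i j. ((v, i), (w, j)) \<in> W \<or> ((w, j), (v, i)) \<in> W)"

text \<open>A closed loop is a connected component without any vertex (all of its points are
  interior points of edges, here: cup points).\<close>

definition no_closed_loops :: "(dart \<times> dart) set \<Rightarrow> bool" where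
  "no_closed_loops W \<longleftrightarrow>
     (\<forall>v \<in> fst ` web_darts W. \<exists>w. (web_adj W)\<^sup>*\<^sup>* v w \<and> \<not> is_cp w)"

definition non_elliptic :: "(dart \<times> dart) set \<Rightarrow> bool" where
  "non_elliptic W \<longleftrightarrow> no_closed_loops W \<and>
     (\<forall>d \<in> web_darts W. internal_face (face W d) \<longrightarrow> 6 \<le> face_sides (face W d))"

end

theory Submission
  imports Defs
begin

text \<open>
  The web stays non-elliptic after every single step of the algorithm. The invariant has two parts:
  every face that is already closed off has at least six sides, and the open face between two
  adjacent hanging strands either reaches the boundary of the disk or has already collected at
  least \<open>gap_bound\<close> sides, a number determined by the signs and states of the two strands.
  A replacement closes at most one face, the open face between the two strands it acts on, and
  there \<open>gap_bound\<close> is at least 4 before an H (which adds two corners), 5 before a Y (one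
  corner) and 6 before a cup (none). The open faces next to a replacement gain at least as many
  corners as their bound grows; under a cup two of them merge, and the bound is subadditive.
  Closed loops cannot occur because every cup point is joined to a vertex that is not a cup point.
\<close>

section \<open>Face permutation of a partial matching\<close>

definition linked :: "(dart \<times> dart) set \<Rightarrow> dart \<Rightarrow> dart \<Rightarrow> bool" where
  "linked E x y \<longleftrightarrow> (x, y) \<in> E \<or> (y, x) \<in> E"

definition partial_matching :: "(dart \<times> dart) set \<Rightarrow> bool" where
  "partial_matching E \<longleftrightarrow> (\<forall>x y z. linked E x y \<longrightarrow> linked E x z \<longrightarrow> y = z)"

lemma linked_sym: "linked E x y \<longleftrightarrow> linked E y x"
  unfolding linked_def by blast

lemma web_darts_iff_linked: "x \<in> web_darts E \<longleftrightarrow> (\<exists>y. linked E x y)"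
  unfolding web_darts_def linked_def by force

lemma web_darts_insert [simp]: "web_darts (insert (a, b) E) = insert a (insert b (web_darts E))"
  unfolding web_darts_def by auto

lemma web_darts_Un [simp]: "web_darts (E \<union> E') = web_darts E \<union> web_darts E'"
  unfolding web_darts_def by auto

lemma web_darts_empty [simp]: "web_darts {} = {}"
  unfolding web_darts_def by simp

lemma web_darts_mono: "E \<subseteq> E' \<Longrightarrow> web_darts E \<subseteq> web_darts E'"
  unfolding web_darts_def by blast

lemma finite_web_darts: "finite E \<Longrightarrow> finite (web_darts E)"
  unfolding web_darts_def by simp

lemma partial_matching_insert:
  assumes "partial_matching E" "a \<notin> web_darts E" "b \<notin> web_darts E" "a \<noteq> b"
  shows "partial_matching (insert (a, b) E)"
  using assms unfolding partial_matching_def web_darts_iff_linked by (auto simp: linked_def)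

lemma alpha_linked:
  assumes "partial_matching E" "linked E x y"
  shows "alpha E x = y"
proof -
  have "(THE e. linked E x e) = y"
    using assms unfolding partial_matching_def by blast
  then show ?thesis
    unfolding alpha_def linked_def .
qed

lemma phi_linked: "partial_matching E \<Longrightarrow> linked E x y \<Longrightarrow> phi E x = rot y"
  by (simp add: phi_def alpha_linked)

lemma phi_edge:
  assumes "partial_matching E"
  shows "(x, y) \<in> E \<Longrightarrow> phi E x = rot y" "(y, x) \<in> E \<Longrightarrow> phi E x = rot y"
  using phi_linked[OF assms] unfolding linked_def by blast+

lemma phi_mono:
  assumes "partial_matching E'" "E \<subseteq> E'" "x \<in> web_darts E"
  shows "phi E' x = phi E x"
proof -
  obtain y where "linked E x y"
    using assms(3) web_darts_iff_linked by blast
  moreover from this have "linked E' x y"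
    using assms(2) unfolding linked_def by blast
  moreover have "partial_matching E"
    using assms(1,2) unfolding partial_matching_def linked_def by blast
  ultimately show ?thesis
    using assms(1) by (simp add: phi_linked)
qed

lemma fst_rot [simp]: "fst (rot x) = fst x"
  by (cases x rule: rot.cases) auto

definition walk :: "(dart \<times> dart) set \<Rightarrow> dart \<Rightarrow> nat \<Rightarrow> dart \<Rightarrow> bool" where
  "walk E x m y \<longleftrightarrow> (\<forall>i<m. (phi E ^^ i) x \<in> web_darts E) \<and> (phi E ^^ m) x = y"

lemma walk_0 [simp]: "walk E x 0 y \<longleftrightarrow> y = x"
  unfolding walk_def by auto

lemma walk_Suc: "walk E x (Suc m) z \<longleftrightarrow> x \<in> web_darts E \<and> walk E (phi E x) m z"
  unfolding walk_def by (auto simp: funpow_Suc_right less_Suc_eq_0_disj simp del: funpow.simps)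

lemma walk_add: "walk E x a y \<Longrightarrow> walk E y b z \<Longrightarrow> walk E x (a + b) z"
  by (induction a arbitrary: x) (auto simp: walk_Suc)

lemma walk_funpow_mono:
  assumes "partial_matching E'" "E \<subseteq> E'" "walk E x m y" "i \<le> m"
  shows "(phi E' ^^ i) x = (phi E ^^ i) x"
  using assms(3,4)
proof (induction i arbitrary: x m)
  case (Suc i)
  then obtain m' where "m = Suc m'" "x \<in> web_darts E" "walk E (phi E x) m' y" "i \<le> m'"
    by (cases m) (auto simp: walk_Suc)
  with Suc.IH show ?case
    using phi_mono[OF assms(1,2)] by (simp add: funpow_Suc_right del: funpow.simps)
qed simp

lemma walk_mono:
  assumes "partial_matching E'" "E \<subseteq> E'" "walk E x m y"
  shows "walk E' x m y"
  using assms(3)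
proof (induction m arbitrary: x)
  case (Suc m)
  then show ?case
    using phi_mono[OF assms(1,2)] web_darts_mono[OF assms(2)] by (auto simp: walk_Suc)
qed simp

lemma funpow_avoid_add:
  assumes "\<forall>i<a. (f ^^ i) x \<noteq> t" "\<forall>i<b. (f ^^ i) ((f ^^ a) x) \<noteq> t"
  shows "\<forall>i<a + b. (f ^^ i) x \<noteq> t"
proof (intro allI impI)
  fix i assume "i < a + b"
  then show "(f ^^ i) x \<noteq> t"
    using assms funpow_add[of "i - a" a f] by (cases "i < a") (auto simp: not_less)
qed

definition tri_count :: "(dart \<Rightarrow> dart) \<Rightarrow> dart \<Rightarrow> nat \<Rightarrow> nat" where
  "tri_count p x m = (\<Sum>i<m. of_bool (is_tri (fst ((p ^^ i) x))))"

lemma tri_count_0 [simp]: "tri_count p x 0 = 0"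
  by (simp add: tri_count_def)

lemma tri_count_Suc: "tri_count p x (Suc m) = of_bool (is_tri (fst x)) + tri_count p (p x) m"
  unfolding tri_count_def sum.lessThan_Suc_shift by (simp add: funpow_Suc_right del: funpow.simps)

lemma tri_count_add: "tri_count p x (a + b) = tri_count p x a + tri_count p ((p ^^ a) x) b"
  by (induction a arbitrary: x) (simp_all add: tri_count_Suc funpow_Suc_right del: funpow.simps)

lemma walk_tri_count_mono:
  assumes "partial_matching E'" "E \<subseteq> E'" "walk E x m y" "n \<le> Suc m"
  shows "tri_count (phi E') x n = tri_count (phi E) x n"
  unfolding tri_count_def using walk_funpow_mono[OF assms(1-3)] assms(4)
  by (intro sum.cong) auto

definition inner_vtx :: "vtx \<Rightarrow> bool" where
  "inner_vtx v \<longleftrightarrow> is_tri v \<or> is_cp v"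

definition closed_face :: "(dart \<times> dart) set \<Rightarrow> dart \<Rightarrow> bool" where
  "closed_face E x \<longleftrightarrow> face E x \<subseteq> web_darts E \<and> internal_face (face E x)"

definition large_closed_faces :: "(dart \<times> dart) set \<Rightarrow> bool" where
  "large_closed_faces E \<longleftrightarrow> (\<forall>x. closed_face E x \<longrightarrow> 6 \<le> face_sides (face E x))"

lemma funpow_in_face: "(phi E ^^ k) x \<in> face E x"
  unfolding face_def by blast

lemma face_funpow_subset: "face E ((phi E ^^ k) x) \<subseteq> face E x"
proof
  fix y assume "y \<in> face E ((phi E ^^ k) x)"
  then obtain i where "y = (phi E ^^ (i + k)) x"
    unfolding face_def by (auto simp: funpow_add)
  then show "y \<in> face E x"
    using funpow_in_face by simp
qed

lemma closed_face_funpow: "closed_face E x \<Longrightarrow> closed_face E ((phi E ^^ k) x)"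
  unfolding closed_face_def internal_face_def using face_funpow_subset by blast

lemma closed_face_funpowD:
  "closed_face E x \<Longrightarrow> (phi E ^^ k) x \<in> web_darts E \<and> inner_vtx (fst ((phi E ^^ k) x))"
  unfolding closed_face_def internal_face_def inner_vtx_def using funpow_in_face by blast

lemma closed_face_walkD: "closed_face E x \<Longrightarrow> walk E x m y \<Longrightarrow> y \<in> web_darts E \<and> inner_vtx (fst y)"
  unfolding walk_def using closed_face_funpowD by blast

lemma face_sides_mono: "F \<subseteq> G \<Longrightarrow> finite G \<Longrightarrow> face_sides F \<le> face_sides G"
  unfolding face_sides_def by (rule card_mono) auto

lemma finite_closed_face: "finite E \<Longrightarrow> closed_face E x \<Longrightarrow> finite (face E x)"
  unfolding closed_face_def using finite_web_darts finite_subset by blast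

lemma face_sides_funpow_le:
  "finite E \<Longrightarrow> closed_face E x \<Longrightarrow> face_sides (face E ((phi E ^^ k) x)) \<le> face_sides (face E x)"
  by (intro face_sides_mono face_funpow_subset finite_closed_face)

lemma tri_count_le_face_sides:
  assumes "(phi E ^^ n) x = x" "\<And>m. 0 < m \<Longrightarrow> m < n \<Longrightarrow> (phi E ^^ m) x \<noteq> x"
    and "finite (face E x)"
  shows "tri_count (phi E) x n \<le> face_sides (face E x)"
proof -
  let ?it = "\<lambda>k. (phi E ^^ k) x"
  have inj: "inj_on ?it {..<n}"
    using inj_on_funpow_least[OF assms(1,2)] by (simp add: lessThan_atLeast0)
  have "tri_count (phi E) x n = card {k \<in> {..<n}. is_tri (fst (?it k))}"
    unfolding tri_count_def by (simp add: Int_def)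
  also have "\<dots> = card (?it ` {k \<in> {..<n}. is_tri (fst (?it k))})"
    by (rule card_image[symmetric]) (rule inj_on_subset[OF inj], auto)
  also have "\<dots> \<le> face_sides (face E x)"
    unfolding face_sides_def
    by (intro card_mono) (use assms(3) funpow_in_face in \<open>simp, blast\<close>)
  finally show ?thesis .
qed

lemma large_closed_faces_extend:
  assumes "large_closed_faces E" "E \<subseteq> E'" "partial_matching E'" "finite E'"
    and new: "\<And>x. x \<in> web_darts E' \<Longrightarrow> x \<notin> web_darts E \<Longrightarrow> closed_face E' x \<Longrightarrow> 6 \<le> face_sides (face E' x)"
  shows "large_closed_faces E'"
  unfolding large_closed_faces_def
proof (intro allI impI)
  fix x assume closed: "closed_face E' x"
  show "6 \<le> face_sides (face E' x)"
  proof (cases "\<exists>k. (phi E' ^^ k) x \<notin> web_darts E")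
    case True
    then obtain k where k: "(phi E' ^^ k) x \<notin> web_darts E" by blast
    have "6 \<le> face_sides (face E' ((phi E' ^^ k) x))"
      using new k closed_face_funpow[OF closed] closed_face_funpowD[OF closed] by blast
    also have "\<dots> \<le> face_sides (face E' x)"
      by (rule face_sides_funpow_le[OF assms(4) closed])
    finally show ?thesis .
  next
    case False
    have it: "(phi E' ^^ k) x = (phi E ^^ k) x" for k
    proof (induction k)
      case (Suc k)
      then have "(phi E ^^ k) x \<in> web_darts E"
        using False by metis
      with Suc.IH show ?case
        using phi_mono[OF assms(3,2)] by simp
    qed simp
    then have "face E' x = face E x"
      unfolding face_def by simp
    moreover have "closed_face E x"
      using closed False it unfolding closed_face_def face_def by auto
    ultimately show ?thesis
      using assms(1) unfolding large_closed_faces_def by metis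
  qed
qed

section \<open>Gaps between hanging strands\<close>

type_synonym strand = "bool \<times> int \<times> dart"

definition hang :: "strand \<Rightarrow> dart" where
  "hang x = snd (snd x)"

lemma hang_conv: "hang (s, j, d) = d"
  by (simp add: hang_def)

definition gap_bound :: "strand \<Rightarrow> strand \<Rightarrow> nat" where
  "gap_bound x y = (case (x, y) of ((s, a, _), (s', b, _)) \<Rightarrow>
     if s = s' then if a \<le> b then 3 else 5
     else if a < b then 2 else if a \<le> b + 1 then 4 else 6)"

definition reaches_boundary :: "(dart \<times> dart) set \<Rightarrow> dart \<Rightarrow> bool" where
  "reaches_boundary E x \<longleftrightarrow> (\<exists>m y. walk E x m y \<and> \<not> inner_vtx (fst y))"

text \<open>
  \<open>rot (hang a)\<close> is the corner just right of strand \<open>a\<close> at the vertex it hangs from; the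
  face walk starting there either leaves through the boundary or arrives at the top of the next
  strand.
\<close>

definition bounded_gap :: "(dart \<times> dart) set \<Rightarrow> strand \<Rightarrow> strand \<Rightarrow> bool" where
  "bounded_gap E a b \<longleftrightarrow>
     (\<exists>m. walk E (rot (hang a)) m (hang b) \<and> gap_bound a b \<le> tri_count (phi E) (rot (hang a)) (Suc m))"

definition gap_ok :: "(dart \<times> dart) set \<Rightarrow> strand \<Rightarrow> strand list \<Rightarrow> bool" where
  "gap_ok E a ys \<longleftrightarrow> reaches_boundary E (rot (hang a)) \<or> (ys \<noteq> [] \<and> bounded_gap E a (hd ys))"

fun gaps_ok :: "(dart \<times> dart) set \<Rightarrow> strand list \<Rightarrow> bool" where
  "gaps_ok E [] \<longleftrightarrow> True"
| "gaps_ok E (a # ys) \<longleftrightarrow> gap_ok E a ys \<and> gaps_ok E ys"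

lemma reaches_boundary_mono:
  "partial_matching E' \<Longrightarrow> E \<subseteq> E' \<Longrightarrow> reaches_boundary E x \<Longrightarrow> reaches_boundary E' x"
  unfolding reaches_boundary_def using walk_mono by blast

lemma bounded_gap_mono:
  assumes "partial_matching E'" "E \<subseteq> E'" "bounded_gap E a b"
  shows "bounded_gap E' a b"
  using assms walk_mono walk_tri_count_mono[OF assms(1,2)] unfolding bounded_gap_def
  by (metis le_refl)

lemma gap_ok_mono: "partial_matching E' \<Longrightarrow> E \<subseteq> E' \<Longrightarrow> gap_ok E a ys \<Longrightarrow> gap_ok E' a ys"
  unfolding gap_ok_def using reaches_boundary_mono bounded_gap_mono by blast

lemma gaps_ok_mono: "partial_matching E' \<Longrightarrow> E \<subseteq> E' \<Longrightarrow> gaps_ok E ys \<Longrightarrow> gaps_ok E' ys"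
  by (induction ys) (auto intro: gap_ok_mono)

lemma gaps_ok_appendD: "gaps_ok E (xs @ ys) \<Longrightarrow> gaps_ok E ys \<and> (xs \<noteq> [] \<longrightarrow> gap_ok E (last xs) ys)"
  by (induction xs) auto

lemma gaps_ok_replace:
  assumes "gaps_ok E (xs @ zs)" "partial_matching E'" "E \<subseteq> E'"
    and "gaps_ok E' ys" "xs \<noteq> [] \<Longrightarrow> gap_ok E' (last xs) ys"
  shows "gaps_ok E' (xs @ ys)"
  using assms(1,4,5)
proof (induction xs)
  case (Cons x xs)
  show ?case
  proof (cases xs)
    case Nil
    then show ?thesis using Cons.prems by simp
  next
    case (Cons x' xs')
    have "gap_ok E' x (xs @ zs)"
      using Cons.prems(1) gap_ok_mono[OF assms(2,3)] by simp
    then have "gap_ok E' x (xs @ ys)"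
      using Cons by (simp add: gap_ok_def)
    moreover have "gaps_ok E' (xs @ ys)"
      using Cons.IH Cons.prems \<open>xs = x' # xs'\<close> by simp
    ultimately show ?thesis by simp
  qed
qed simp

lemma reaches_boundary_refl: "\<not> inner_vtx (fst x) \<Longrightarrow> reaches_boundary E x"
  unfolding reaches_boundary_def using walk_0 by blast

lemma reaches_boundary_walk: "walk E x m y \<Longrightarrow> reaches_boundary E y \<Longrightarrow> reaches_boundary E x"
  unfolding reaches_boundary_def using walk_add by blast

lemma bounded_gap_snoc:
  assumes "bounded_gap E a b" "hang b \<in> web_darts E" "phi E (hang b) = hang b'"
    and "is_tri (fst (hang b'))" "gap_bound a b' \<le> gap_bound a b + 1"
  shows "bounded_gap E a b'"
proof -
  obtain m where walk: "walk E (rot (hang a)) m (hang b)"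
    and bound: "gap_bound a b \<le> tri_count (phi E) (rot (hang a)) (Suc m)"
    using assms(1) unfolding bounded_gap_def by blast
  have "walk E (rot (hang a)) (Suc m) (hang b')"
    using walk_add[OF walk, of 1] assms(2,3) by (simp add: walk_Suc)
  moreover have "tri_count (phi E) (rot (hang a)) (Suc (Suc m))
      = tri_count (phi E) (rot (hang a)) (Suc m) + 1"
    using tri_count_add[of "phi E" _ "Suc m" 1] walk assms(3,4) by (simp add: walk_def tri_count_Suc)
  ultimately show ?thesis
    unfolding bounded_gap_def using bound assms(5) by (intro exI[of _ "Suc m"]) simp
qed

lemma bounded_gap_cons:
  assumes "bounded_gap E a b" "rot (hang a') \<in> web_darts E" "phi E (rot (hang a')) = rot (hang a)"
    and "is_tri (fst (hang a'))" "gap_bound a' b \<le> gap_bound a b + 1"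
  shows "bounded_gap E a' b"
proof -
  obtain m where walk: "walk E (rot (hang a)) m (hang b)"
    and bound: "gap_bound a b \<le> tri_count (phi E) (rot (hang a)) (Suc m)"
    using assms(1) unfolding bounded_gap_def by blast
  show ?thesis
    unfolding bounded_gap_def using walk bound assms(2-5)
    by (intro exI[of _ "Suc m"]) (simp add: walk_Suc tri_count_Suc[of _ _ "Suc m"])
qed

lemma bounded_gap_merge:
  assumes "bounded_gap E a b" "bounded_gap E a' b'" "gap_bound a b' \<le> gap_bound a b + gap_bound a' b'"
    and "hang b \<in> web_darts E" "phi E (hang b) = z" "z \<in> web_darts E" "\<not> is_tri (fst z)"
    and "phi E z = rot (hang a')"
  shows "bounded_gap E a b'"
proof -
  obtain m where walk: "walk E (rot (hang a)) m (hang b)"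
    and bound: "gap_bound a b \<le> tri_count (phi E) (rot (hang a)) (Suc m)"
    using assms(1) unfolding bounded_gap_def by blast
  obtain m' where walk': "walk E (rot (hang a')) m' (hang b')"
    and bound': "gap_bound a' b' \<le> tri_count (phi E) (rot (hang a')) (Suc m')"
    using assms(2) unfolding bounded_gap_def by blast
  have "walk E (hang b) (Suc (Suc m')) (hang b')"
    using walk' assms(4-8) by (simp add: walk_Suc)
  then have "walk E (rot (hang a)) (m + Suc (Suc m')) (hang b')"
    using walk_add[OF walk] by blast
  moreover have "tri_count (phi E) (rot (hang a)) (Suc (m + Suc (Suc m')))
      = tri_count (phi E) (rot (hang a)) (Suc m) + tri_count (phi E) (rot (hang a')) (Suc m')"
    using tri_count_add[of "phi E" _ "Suc m" "Suc (Suc m')"] walk assms(5,7,8)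
    by (simp add: walk_def tri_count_Suc[of _ z])
  ultimately show ?thesis
    unfolding bounded_gap_def using bound bound' assms(3) by (intro exI[of _ "m + Suc (Suc m')"]) simp
qed

lemma gap_ok_cons:
  assumes "gap_ok E a ys" "rot (hang a') \<in> web_darts E" "phi E (rot (hang a')) = rot (hang a)"
    and "is_tri (fst (hang a'))" "ys \<noteq> [] \<Longrightarrow> gap_bound a' (hd ys) \<le> gap_bound a (hd ys) + 1"
  shows "gap_ok E a' ys"
proof -
  have "reaches_boundary E (rot (hang a)) \<Longrightarrow> reaches_boundary E (rot (hang a'))"
    using reaches_boundary_walk[of E "rot (hang a')" 1] assms(2,3) by (simp add: walk_Suc)
  moreover have "bounded_gap E a (hd ys) \<Longrightarrow> ys \<noteq> [] \<Longrightarrow> bounded_gap E a' (hd ys)"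
    using bounded_gap_cons[OF _ assms(2-4)] assms(5) by blast
  ultimately show ?thesis
    using assms(1) unfolding gap_ok_def by blast
qed

lemma gap_ok_snoc:
  assumes "gap_ok E a (b # ys)" "hang b \<in> web_darts E" "phi E (hang b) = hang b'"
    and "is_tri (fst (hang b'))" "gap_bound a b' \<le> gap_bound a b + 1"
  shows "gap_ok E a (b' # zs)"
  using assms(1) bounded_gap_snoc[OF _ assms(2-5)] unfolding gap_ok_def by auto

lemma gap_ok_merge:
  assumes "gap_ok E a (b # zs)" "gap_ok E a' ys"
    and "ys \<noteq> [] \<Longrightarrow> gap_bound a (hd ys) \<le> gap_bound a b + gap_bound a' (hd ys)"
    and "hang b \<in> web_darts E" "phi E (hang b) = z" "z \<in> web_darts E" "\<not> is_tri (fst z)"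
    and "phi E z = rot (hang a')"
  shows "gap_ok E a ys"
proof (cases "reaches_boundary E (rot (hang a))")
  case False
  then have gap: "bounded_gap E a b"
    using assms(1) unfolding gap_ok_def by simp
  then obtain m where walk: "walk E (rot (hang a)) m (hang b)"
    unfolding bounded_gap_def by blast
  have "walk E (hang b) 2 (rot (hang a'))"
    using assms(4-8) by (simp add: numeral_2_eq_2 walk_Suc)
  then have "\<not> reaches_boundary E (rot (hang a'))"
    using False walk_add[OF walk] reaches_boundary_walk by blast
  then have "ys \<noteq> []" "bounded_gap E a' (hd ys)"
    using assms(2) unfolding gap_ok_def by auto
  then show ?thesis
    using bounded_gap_merge[OF gap _ assms(3) assms(4-8)] unfolding gap_ok_def by simp
qed (simp add: gap_ok_def)

lemma gap_ok_closed_face: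
  assumes "gap_ok E a ys" "closed_face E y" "phi E y = rot (hang a)"
    and "ys \<noteq> [] \<Longrightarrow> hang (hd ys) \<notin> web_darts E"
  shows False
proof -
  have closed: "closed_face E (rot (hang a))"
    using closed_face_funpow[OF assms(2), of 1] assms(3) by simp
  show False
    using assms(1,4) closed_face_walkD[OF closed] unfolding gap_ok_def reaches_boundary_def bounded_gap_def
    by blast
qed

text \<open>
  The face of \<open>x\<close> is \<open>x\<close>, then the walk of the gap from \<open>a\<close> to \<open>b\<close>, then the tail back to
  \<open>x\<close>; it does not return to \<open>x\<close> early because the gap walk stays in the old web.
\<close>

lemma face_sides_closing_gap:
  assumes matching: "partial_matching E'" and sub: "E \<subseteq> E'" and fin: "finite E'"
    and closed: "closed_face E' x" and new: "x \<notin> web_darts E"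
    and enter: "phi E' x = rot (hang a)" and gap: "bounded_gap E a b" and ne: "hang b \<noteq> x"
    and tail: "walk E' (phi E' (hang b)) r x" and first: "\<forall>i<r. (phi E' ^^ i) (phi E' (hang b)) \<noteq> x"
  shows "gap_bound a b + tri_count (phi E') (phi E' (hang b)) (Suc r) \<le> face_sides (face E' x)"
proof -
  let ?p = "phi E'" and ?y = "rot (hang a)"
  obtain m where walk: "walk E ?y m (hang b)" and bound: "gap_bound a b \<le> tri_count (phi E) ?y (Suc m)"
    using gap unfolding bounded_gap_def by blast
  have walk_y: "walk E' ?y m (hang b)"
    using walk_mono[OF matching sub walk] .
  have walk_x: "walk E' x (Suc m) (hang b)"
    using walk_y closed_face_funpowD[OF closed, of 0] enter by (simp add: walk_Suc)
  have walk_back: "walk E' (hang b) (Suc r) x"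
    using tail closed_face_walkD[OF closed walk_x] by (simp add: walk_Suc)
  let ?n = "Suc m + Suc r"
  have cycle: "(?p ^^ ?n) x = x"
    using walk_add[OF walk_x walk_back] unfolding walk_def by blast
  have "\<forall>i<m. (?p ^^ i) ?y \<noteq> x"
    using walk new walk_funpow_mono[OF matching sub walk] unfolding walk_def by auto
  moreover have "\<forall>i<Suc r. (?p ^^ i) ((?p ^^ m) ?y) \<noteq> x"
    using walk_y ne first unfolding walk_def
    by (auto simp: less_Suc_eq_0_disj funpow_Suc_right simp del: funpow.simps)
  ultimately have "\<forall>i<m + Suc r. (?p ^^ i) ?y \<noteq> x"
    by (rule funpow_avoid_add)
  then have first_return: "(?p ^^ i) x \<noteq> x" if "0 < i" "i < ?n" for i
    using that enter by (cases i) (auto simp: funpow_Suc_right simp del: funpow.simps)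
  have "tri_count ?p x ?n = of_bool (is_tri (fst x)) + tri_count ?p ?y m + tri_count ?p (hang b) (Suc r)"
    using tri_count_add[of ?p x "Suc m" "Suc r"] walk_x enter by (simp add: walk_def tri_count_Suc)
  also have "\<dots> = tri_count ?p ?y (Suc m) + tri_count ?p (?p (hang b)) (Suc r)"
    using tri_count_add[of ?p ?y m 1] tri_count_add[of ?p "?p (hang b)" r 1] walk_y tail
    by (simp add: walk_def tri_count_Suc)
  also have "tri_count ?p ?y (Suc m) = tri_count (phi E) ?y (Suc m)"
    using walk_tri_count_mono[OF matching sub walk] by simp
  finally have "gap_bound a b + tri_count ?p (?p (hang b)) (Suc r) \<le> tri_count ?p x ?n"
    using bound by linarith
  also have "\<dots> \<le> face_sides (face E' x)"
    using tri_count_le_face_sides[OF cycle first_return finite_closed_face[OF fin closed]] .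
  finally show ?thesis .
qed

section \<open>The invariant of the growth algorithm\<close>

fun allocated :: "nat \<Rightarrow> dart \<Rightarrow> bool" where
  "allocated c (Tri m, _) \<longleftrightarrow> m < c"
| "allocated c (Cp m, _) \<longleftrightarrow> m < c"
| "allocated c _ \<longleftrightarrow> True"

lemma allocated_mono: "allocated c x \<Longrightarrow> c \<le> c' \<Longrightarrow> allocated c' x"
  by (cases "(c, x)" rule: allocated.cases) auto

locale grow_inv =
  fixes L :: "strand list" and c :: nat and E :: "(dart \<times> dart) set"
  assumes finite_edges: "finite E"
    and matching: "partial_matching E"
    and distinct_hangs: "distinct (map hang L)"
    and hang_unmatched: "x \<in> hang ` set L \<Longrightarrow> x \<notin> web_darts E"
    and allocated_darts: "x \<in> web_darts E \<union> hang ` set L \<Longrightarrow> allocated c x"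
    and hang_not_cup: "x \<in> hang ` set L \<Longrightarrow> \<not> is_cp (fst x)"
    and rot_attached:
      "x \<in> web_darts E \<union> hang ` set L \<Longrightarrow> inner_vtx (fst x) \<Longrightarrow> rot x \<in> web_darts E \<union> hang ` set L"
    and state_range: "(s, j, d) \<in> set L \<Longrightarrow> j \<in> {-1, 0, 1}"
    and cup_not_source: "(x, y) \<in> E \<Longrightarrow> \<not> is_cp (fst x)"
    and gaps: "gaps_ok E L"
    and closed_faces: "large_closed_faces E"

locale replacement = grow_inv "xs @ [a, b] @ ys" c E
  for xs a b ys c E +
  fixes M :: "strand list" and c' :: nat and E' :: "(dart \<times> dart) set"
  assumes alloc_mono: "c \<le> c'"
    and edges_mono: "E \<subseteq> E'"
    and finite_edges': "finite E'"
    and matching': "partial_matching E'"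
    and hangs_matched': "hang a \<in> web_darts E'" "hang b \<in> web_darts E'"
    and new_darts:
      "x \<in> web_darts E' \<Longrightarrow> x \<notin> web_darts E \<Longrightarrow> x \<noteq> hang a \<Longrightarrow> x \<noteq> hang b \<Longrightarrow>
       \<not> allocated c x \<and> allocated c' x"
    and new_sources: "(x, y) \<in> E' \<Longrightarrow> (x, y) \<notin> E \<Longrightarrow> \<not> is_cp (fst x)"
    and new_hangs: "x \<in> hang ` set M \<Longrightarrow> \<not> allocated c x \<and> allocated c' x \<and> \<not> is_cp (fst x) \<and> x \<notin> web_darts E'"
    and distinct_new_hangs: "distinct (map hang M)"
    and new_states: "(s, j, d) \<in> set M \<Longrightarrow> j \<in> {-1, 0, 1}"
    and new_rot_attached:
      "x \<in> web_darts E' \<union> hang ` set M \<Longrightarrow> \<not> allocated c x \<Longrightarrow> inner_vtx (fst x) \<Longrightarrow>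
       rot x \<in> web_darts E' \<union> hang ` set M"
begin

lemma kept_hang_unmatched:
  assumes "x \<in> hang ` set (xs @ ys)"
  shows "x \<notin> web_darts E'"
proof -
  have "hang a \<notin> hang ` set (xs @ ys)" "hang b \<notin> hang ` set (xs @ ys)"
    using distinct_hangs by auto
  then have "x \<noteq> hang a" "x \<noteq> hang b"
    using assms by blast+
  moreover have "x \<notin> web_darts E" "allocated c x"
    using hang_unmatched allocated_darts assms by auto
  ultimately show ?thesis
    using new_darts by blast
qed

lemma attached_mono:
  "x \<in> web_darts E \<union> hang ` set (xs @ [a, b] @ ys) \<Longrightarrow> x \<in> web_darts E' \<union> hang ` set (xs @ M @ ys)"
  using web_darts_mono[OF edges_mono] hangs_matched' by auto

lemma old_gaps:
  "gap_ok E a (b # ys)" "gap_ok E b ys" "gaps_ok E ys" "xs \<noteq> [] \<Longrightarrow> gap_ok E (last xs) (a # b # ys)"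
  using gaps_ok_appendD[OF gaps] by auto

lemma gaps_ok_replacement:
  assumes "gaps_ok E' (M @ ys)" "xs \<noteq> [] \<Longrightarrow> gap_ok E' (last xs) (M @ ys)"
  shows "gaps_ok E' (xs @ M @ ys)"
  using gaps_ok_replace[OF gaps matching' edges_mono assms] by simp

lemma no_closed_face_into_right_gap:
  assumes "closed_face E' y" "phi E' y = rot (hang b)"
  shows False
proof (rule gap_ok_closed_face[OF _ assms])
  show "gap_ok E' b ys"
    using gap_ok_mono[OF matching' edges_mono old_gaps(2)] .
  show "hang (hd ys) \<notin> web_darts E'" if "ys \<noteq> []"
    using kept_hang_unmatched that by (cases ys) auto
qed

lemma closing_face_large:
  assumes closed: "closed_face E' x" and fresh: "\<not> allocated c x"
    and enter: "phi E' x = rot (hang a)"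
    and tail: "walk E' (phi E' (hang b)) r x" "\<forall>i<r. (phi E' ^^ i) (phi E' (hang b)) \<noteq> x"
    and enough: "6 \<le> gap_bound a b + tri_count (phi E') (phi E' (hang b)) (Suc r)"
  shows "6 \<le> face_sides (face E' x)"
proof (cases "reaches_boundary E (rot (hang a))")
  case True
  then have "reaches_boundary E' ((phi E' ^^ 1) x)"
    using reaches_boundary_mono[OF matching' edges_mono] enter by simp
  then show ?thesis
    using closed_face_funpow[OF closed] closed_face_walkD
    unfolding reaches_boundary_def by blast
next
  case False
  then have "bounded_gap E a b"
    using old_gaps(1) unfolding gap_ok_def by simp
  moreover have "x \<notin> web_darts E"
    using fresh allocated_darts by blast
  moreover have "hang b \<noteq> x"
    using fresh allocated_darts[of "hang b"] by auto
  ultimately show ?thesis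
    using face_sides_closing_gap[OF matching' edges_mono finite_edges' closed _ enter _ _ tail] enough
    by linarith
qed

lemma attached_replacement_cases:
  assumes "x \<in> web_darts E' \<union> hang ` set (xs @ M @ ys)"
  obtains "allocated c x" "x \<in> web_darts E \<union> hang ` set (xs @ [a, b] @ ys)"
  | "\<not> allocated c x" "allocated c' x" "x \<in> web_darts E' \<union> hang ` set M"
proof -
  consider "x \<in> web_darts E \<union> hang ` set (xs @ [a, b] @ ys)"
    | "x \<in> web_darts E'" "x \<notin> web_darts E" "x \<noteq> hang a" "x \<noteq> hang b"
    | "x \<in> hang ` set M"
    using assms by auto
  then show thesis
  proof cases
    case 1
    then show thesis using that(1) allocated_darts by blast
  next
    case 2
    then show thesis using that(2) new_darts by blast
  next
    case 3
    then show thesis using that(2) new_hangs by blast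
  qed
qed

lemma grow_inv_replacement:
  assumes "gaps_ok E' (xs @ M @ ys)" "large_closed_faces E'"
  shows "grow_inv (xs @ M @ ys) c' E'"
proof (rule grow_inv.intro)
  have old_alloc: "allocated c x" if "x \<in> hang ` set (xs @ [a, b] @ ys)" for x
    using allocated_darts that by blast
  have new_alloc: "\<not> allocated c x" if "x \<in> hang ` set M" for x
    using new_hangs that by blast
  show "finite E'" "partial_matching E'" "gaps_ok E' (xs @ M @ ys)" "large_closed_faces E'"
    using finite_edges' matching' assms by simp_all
  have "distinct (map hang xs @ map hang ys)"
    using distinct_hangs by auto
  moreover have "hang ` set M \<inter> hang ` set (xs @ ys) = {}"
    using old_alloc new_alloc unfolding set_append image_Un by blast
  ultimately show "distinct (map hang (xs @ M @ ys))"
    using distinct_new_hangs by auto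
  show "x \<notin> web_darts E'" if "x \<in> hang ` set (xs @ M @ ys)" for x
    using that new_hangs kept_hang_unmatched unfolding set_append image_Un by blast
  show "allocated c' x" if "x \<in> web_darts E' \<union> hang ` set (xs @ M @ ys)" for x
    using that by (rule attached_replacement_cases) (use allocated_darts allocated_mono alloc_mono in blast)+
  show "\<not> is_cp (fst x)" if "x \<in> hang ` set (xs @ M @ ys)" for x
    using that hang_not_cup new_hangs unfolding set_append image_Un by blast
  show "rot x \<in> web_darts E' \<union> hang ` set (xs @ M @ ys)"
    if "x \<in> web_darts E' \<union> hang ` set (xs @ M @ ys)" "inner_vtx (fst x)" for x
    using that(1)
  proof (rule attached_replacement_cases)
    assume "x \<in> web_darts E \<union> hang ` set (xs @ [a, b] @ ys)"
    then show ?thesis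
      using rot_attached that(2) attached_mono by blast
  next
    assume "\<not> allocated c x" "x \<in> web_darts E' \<union> hang ` set M"
    then have "rot x \<in> web_darts E' \<union> hang ` set M"
      using new_rot_attached that(2) by blast
    then show ?thesis by auto
  qed
  show "j \<in> {-1, 0, 1}" if "(s, j, d) \<in> set (xs @ M @ ys)" for s j d
    using that state_range[of s j d] new_states[of s j d] by auto
  show "\<not> is_cp (fst x)" if "(x, y) \<in> E'" for x y
    using that cup_not_source new_sources by blast
qed

end

section \<open>The three replacements\<close>

lemma rot_slots [simp]:
  "rot (Tri m, 0) = (Tri m, 1)" "rot (Tri m, 1) = (Tri m, 2)" "rot (Tri m, 2) = (Tri m, 0)"
  "rot (Cp m, 0) = (Cp m, 1)" "rot (Cp m, 1) = (Cp m, 0)"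
  by simp_all

text \<open>
  Keep slots as numerals: by default \<open>1 :: nat\<close> is rewritten to \<open>Suc 0\<close>, and
  \<open>rot (Tri m, 1)\<close> to a slot \<open>Suc (Suc 0)\<close> that no longer matches \<open>2\<close>.
\<close>

declare rot.simps [simp del] One_nat_def [simp del]

locale H_replacement = grow_inv "xs @ [(s, j, d), (s', j', d')] @ ys" c E
  for xs s j d s' j' d' ys c E +
  fixes nj nj' :: int
  assumes signs: "s' \<noteq> s"
    and states: "((j, j'), (nj, nj')) \<in> {((1, 0), (0, 1)), ((0, 0), (-1, 1)), ((0, -1), (-1, 0))}"
begin

definition strands' :: "strand list" where
  "strands' = [(s', nj, (Tri c, 1)), (s, nj', (Tri (Suc c), 2))]"

definition edges' :: "(dart \<times> dart) set" where
  "edges' = E \<union> {(d, (Tri c, 0)), (d', (Tri (Suc c), 0)), ((Tri c, 2), (Tri (Suc c), 1))}"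

lemma old_darts:
  "allocated c d" "allocated c d'" "d \<notin> web_darts E" "d' \<notin> web_darts E" "d \<noteq> d'"
  "\<not> is_cp (fst d)" "\<not> is_cp (fst d')"
  using allocated_darts hang_unmatched distinct_hangs hang_not_cup by (auto simp: hang_conv)

lemma fresh_darts: "(Tri c, i) \<notin> web_darts E" "(Tri (Suc c), i) \<notin> web_darts E"
  "d \<noteq> (Tri c, i)" "d \<noteq> (Tri (Suc c), i)" "d' \<noteq> (Tri c, i)" "d' \<noteq> (Tri (Suc c), i)"
  "(Tri c, i) \<noteq> d" "(Tri (Suc c), i) \<noteq> d" "(Tri c, i) \<noteq> d'" "(Tri (Suc c), i) \<noteq> d'"
  using allocated_darts[of "(Tri c, i)"] allocated_darts[of "(Tri (Suc c), i)"] old_darts(1,2) by auto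

lemma partial_matching_edges': "partial_matching edges'"
proof -
  have "edges' = insert (d, (Tri c, 0)) (insert (d', (Tri (Suc c), 0)) (insert ((Tri c, 2), (Tri (Suc c), 1)) E))"
    by (auto simp: edges'_def)
  then show ?thesis
    by (simp only:) (intro partial_matching_insert matching; use old_darts fresh_darts in simp)
qed

lemma web_darts_edges':
  "web_darts edges' = web_darts E \<union> {d, d', (Tri c, 0), (Tri (Suc c), 0), (Tri c, 2), (Tri (Suc c), 1)}"
  by (auto simp: edges'_def)

lemma phi_edges':
  "phi edges' d = (Tri c, 1)" "phi edges' (Tri c, 0) = rot d"
  "phi edges' d' = (Tri (Suc c), 1)" "phi edges' (Tri (Suc c), 0) = rot d'"
  "phi edges' (Tri c, 2) = (Tri (Suc c), 2)" "phi edges' (Tri (Suc c), 1) = (Tri c, 0)"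
proof -
  show "phi edges' d = (Tri c, 1)"
    using phi_edge(1)[OF partial_matching_edges', of "d" "(Tri c, 0)"] by (simp add: edges'_def)
  show "phi edges' (Tri c, 0) = rot d"
    using phi_edge(2)[OF partial_matching_edges', of "d" "(Tri c, 0)"] by (simp add: edges'_def)
  show "phi edges' d' = (Tri (Suc c), 1)"
    using phi_edge(1)[OF partial_matching_edges', of "d'" "(Tri (Suc c), 0)"] by (simp add: edges'_def)
  show "phi edges' (Tri (Suc c), 0) = rot d'"
    using phi_edge(2)[OF partial_matching_edges', of "d'" "(Tri (Suc c), 0)"] by (simp add: edges'_def)
  show "phi edges' (Tri c, 2) = (Tri (Suc c), 2)"
    using phi_edge(1)[OF partial_matching_edges', of "(Tri c, 2)" "(Tri (Suc c), 1)"] by (simp add: edges'_def)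
  show "phi edges' (Tri (Suc c), 1) = (Tri c, 0)"
    using phi_edge(2)[OF partial_matching_edges', of "(Tri c, 2)" "(Tri (Suc c), 1)"] by (simp add: edges'_def)
qed

sublocale replacement xs "(s, j, d)" "(s', j', d')" ys c E strands' "Suc (Suc c)" edges'
proof
  show "E \<subseteq> edges'" "finite edges'" "partial_matching edges'"
    using finite_edges partial_matching_edges' by (auto simp: edges'_def)
  show "hang (s, j, d) \<in> web_darts edges'" "hang (s', j', d') \<in> web_darts edges'"
    by (simp_all add: hang_conv web_darts_edges')
  show "\<not> allocated c x \<and> allocated (Suc (Suc c)) x"
    if "x \<in> web_darts edges'" "x \<notin> web_darts E" "x \<noteq> hang (s, j, d)" "x \<noteq> hang (s', j', d')" for x
    using that by (auto simp: web_darts_edges' hang_conv)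
  show "\<not> is_cp (fst x)" if "(x, y) \<in> edges'" "(x, y) \<notin> E" for x y
    using that old_darts by (auto simp: edges'_def)
  show "\<not> allocated c x \<and> allocated (Suc (Suc c)) x \<and> \<not> is_cp (fst x) \<and> x \<notin> web_darts edges'"
    if "x \<in> hang ` set strands'" for x
  proof -
    have "x = (Tri c, 1) \<or> x = (Tri (Suc c), 2)"
      using that by (auto simp: strands'_def hang_conv)
    then show ?thesis
      by (elim disjE) (simp_all add: web_darts_edges' fresh_darts)
  qed
  show "distinct (map hang strands')"
    by (simp add: strands'_def hang_conv)
  show "j \<in> {-1, 0, 1}" if "(s, j, d) \<in> set strands'" for s j d
    using that states by (auto simp: strands'_def)
  show "rot x \<in> web_darts edges' \<union> hang ` set strands'"
    if "x \<in> web_darts edges' \<union> hang ` set strands'" "\<not> allocated c x" for x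
  proof -
    have "x \<in> {(Tri c, 0), (Tri c, 1), (Tri c, 2), (Tri (Suc c), 0), (Tri (Suc c), 1), (Tri (Suc c), 2)}"
      using that old_darts(1,2) allocated_darts[of x] by (auto simp: web_darts_edges' strands'_def hang_conv)
    then show ?thesis
      by (auto simp: web_darts_edges' strands'_def hang_conv)
  qed
qed simp

lemma gap_bound_left: "gap_bound (r, t, x) (s', nj, y) \<le> gap_bound (r, t, x) (s, j, d) + 1"
  using signs states by (auto simp: gap_bound_def)

lemma gap_bound_right: "gap_bound (s, nj', x) (u, t, y) \<le> gap_bound (s', j', d') (u, t, y) + 1"
  using signs states by (auto simp: gap_bound_def)

lemma gap_bound_middle: "gap_bound (s', nj, x) (s, nj', y) \<le> 2"
  using signs states by (auto simp: gap_bound_def)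

lemma gap_bound_closing: "4 \<le> gap_bound (s, j, d) (s', j', d')"
  using signs states by (auto simp: gap_bound_def)

lemma gaps_ok_edges': "gaps_ok edges' (xs @ strands' @ ys)"
proof (rule gaps_ok_replacement)
  have "bounded_gap edges' (s', nj, (Tri c, 1)) (s, nj', (Tri (Suc c), 2))"
    unfolding bounded_gap_def hang_conv using gap_bound_middle
    by (intro exI[of _ "Suc 0"]) (simp add: walk_Suc web_darts_edges' phi_edges' tri_count_Suc)
  moreover have "gap_ok edges' (s, nj', (Tri (Suc c), 2)) ys"
  proof (rule gap_ok_cons[OF gap_ok_mono[OF matching' edges_mono old_gaps(2)]])
    show "gap_bound (s, nj', (Tri (Suc c), 2)) (hd ys) \<le> gap_bound (s', j', d') (hd ys) + 1"
      using gap_bound_right by (cases "hd ys") auto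
  qed (simp_all add: hang_conv web_darts_edges' phi_edges')
  ultimately show "gaps_ok edges' (strands' @ ys)"
    using gaps_ok_mono[OF matching' edges_mono old_gaps(3)] by (simp add: strands'_def gap_ok_def)
  show "gap_ok edges' (last xs) (strands' @ ys)" if "xs \<noteq> []"
  proof -
    have "gap_ok edges' (last xs) ((s', nj, (Tri c, 1)) # (s, nj', (Tri (Suc c), 2)) # ys)"
    proof (rule gap_ok_snoc[OF gap_ok_mono[OF matching' edges_mono old_gaps(4)[OF that]]])
      show "gap_bound (last xs) (s', nj, (Tri c, 1)) \<le> gap_bound (last xs) (s, j, d) + 1"
        using gap_bound_left by (cases "last xs") auto
    qed (simp_all add: hang_conv web_darts_edges' phi_edges')
    then show ?thesis
      by (simp add: strands'_def)
  qed
qed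

lemma large_closed_faces_edges': "large_closed_faces edges'"
proof (rule large_closed_faces_extend[OF closed_faces edges_mono matching' finite_edges'])
  have closing: "6 \<le> face_sides (face edges' (Tri c, 0))" if "closed_face edges' (Tri c, 0)"
  proof (rule closing_face_large[OF that, where r = "Suc 0"])
    show "6 \<le> gap_bound (s, j, d) (s', j', d') + tri_count (phi edges') (phi edges' (hang (s', j', d'))) (Suc (Suc 0))"
      using gap_bound_closing by (simp add: hang_conv phi_edges' tri_count_Suc)
  qed (simp_all add: hang_conv walk_Suc web_darts_edges' phi_edges')
  have via_closing: "6 \<le> face_sides (face edges' x)"
    if "closed_face edges' x" "(phi edges' ^^ k) x = (Tri c, 0)" for x k
    using closing closed_face_funpow[OF that(1), of k] face_sides_funpow_le[OF finite_edges' that(1), of k]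
    that(2) by simp
  fix x assume "x \<in> web_darts edges'" "x \<notin> web_darts E" and closed: "closed_face edges' x"
  then consider "x = d" | "x = d'" | "x = (Tri c, 0)" | "x = (Tri (Suc c), 0)" | "x = (Tri c, 2)"
    | "x = (Tri (Suc c), 1)"
    by (auto simp: web_darts_edges')
  then show "6 \<le> face_sides (face edges' x)"
  proof cases
    case 1
    then show ?thesis
      using closed_face_funpowD[OF closed, of "Suc 0"] fresh_darts by (simp add: phi_edges' web_darts_edges')
  next
    case 2
    then show ?thesis
      using via_closing[OF closed, of "Suc (Suc 0)"] by (simp add: phi_edges')
  next
    case 3
    then show ?thesis
      using via_closing[OF closed, of 0] by simp
  next
    case 4
    then show ?thesis
      using no_closed_face_into_right_gap[OF closed] by (simp add: phi_edges' hang_conv)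
  next
    case 5
    then show ?thesis
      using closed_face_funpowD[OF closed, of "Suc 0"] fresh_darts by (simp add: phi_edges' web_darts_edges')
  next
    case 6
    then show ?thesis
      using via_closing[OF closed, of "Suc 0"] by (simp add: phi_edges')
  qed
qed

lemma grow_inv_H: "grow_inv (xs @ strands' @ ys) (Suc (Suc c)) edges'"
  by (rule grow_inv_replacement[OF gaps_ok_edges' large_closed_faces_edges'])

end

locale Y_replacement = grow_inv "xs @ [(s, j, d), (s, j', d')] @ ys" c E
  for xs s j d j' d' ys c E +
  fixes nj :: int
  assumes states: "((j, j'), nj) \<in> {((1, 0), 1), ((0, -1), -1), ((1, -1), 0)}"
begin

definition strands' :: "strand list" where
  "strands' = [(\<not> s, nj, (Tri c, 1))]"

definition edges' :: "(dart \<times> dart) set" where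
  "edges' = E \<union> {(d, (Tri c, 0)), (d', (Tri c, 2))}"

lemma old_darts:
  "allocated c d" "allocated c d'" "d \<notin> web_darts E" "d' \<notin> web_darts E" "d \<noteq> d'"
  "\<not> is_cp (fst d)" "\<not> is_cp (fst d')"
  using allocated_darts hang_unmatched distinct_hangs hang_not_cup by (auto simp: hang_conv)

lemma fresh_darts: "(Tri c, i) \<notin> web_darts E"
  "d \<noteq> (Tri c, i)" "d' \<noteq> (Tri c, i)" "(Tri c, i) \<noteq> d" "(Tri c, i) \<noteq> d'"
  using allocated_darts[of "(Tri c, i)"] old_darts(1,2) by auto

lemma partial_matching_edges': "partial_matching edges'"
proof -
  have "edges' = insert (d, (Tri c, 0)) (insert (d', (Tri c, 2)) E)"
    by (auto simp: edges'_def)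
  then show ?thesis
    by (simp only:) (intro partial_matching_insert matching; use old_darts fresh_darts in simp)
qed

lemma web_darts_edges': "web_darts edges' = web_darts E \<union> {d, d', (Tri c, 0), (Tri c, 2)}"
  by (auto simp: edges'_def)

lemma phi_edges':
  "phi edges' d = (Tri c, 1)" "phi edges' (Tri c, 0) = rot d"
  "phi edges' d' = (Tri c, 0)" "phi edges' (Tri c, 2) = rot d'"
proof -
  show "phi edges' d = (Tri c, 1)"
    using phi_edge(1)[OF partial_matching_edges', of "d" "(Tri c, 0)"] by (simp add: edges'_def)
  show "phi edges' (Tri c, 0) = rot d"
    using phi_edge(2)[OF partial_matching_edges', of "d" "(Tri c, 0)"] by (simp add: edges'_def)
  show "phi edges' d' = (Tri c, 0)"
    using phi_edge(1)[OF partial_matching_edges', of "d'" "(Tri c, 2)"] by (simp add: edges'_def)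
  show "phi edges' (Tri c, 2) = rot d'"
    using phi_edge(2)[OF partial_matching_edges', of "d'" "(Tri c, 2)"] by (simp add: edges'_def)
qed

sublocale replacement xs "(s, j, d)" "(s, j', d')" ys c E strands' "Suc c" edges'
proof
  show "E \<subseteq> edges'" "finite edges'" "partial_matching edges'"
    using finite_edges partial_matching_edges' by (auto simp: edges'_def)
  show "hang (s, j, d) \<in> web_darts edges'" "hang (s, j', d') \<in> web_darts edges'"
    by (simp_all add: hang_conv web_darts_edges')
  show "\<not> allocated c x \<and> allocated (Suc c) x"
    if "x \<in> web_darts edges'" "x \<notin> web_darts E" "x \<noteq> hang (s, j, d)" "x \<noteq> hang (s, j', d')" for x
    using that by (auto simp: web_darts_edges' hang_conv)
  show "\<not> is_cp (fst x)" if "(x, y) \<in> edges'" "(x, y) \<notin> E" for x y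
    using that old_darts by (auto simp: edges'_def)
  show "\<not> allocated c x \<and> allocated (Suc c) x \<and> \<not> is_cp (fst x) \<and> x \<notin> web_darts edges'"
    if "x \<in> hang ` set strands'" for x
    using that by (simp add: strands'_def hang_conv web_darts_edges' fresh_darts)
  show "distinct (map hang strands')"
    by (simp add: strands'_def)
  show "j \<in> {-1, 0, 1}" if "(s, j, d) \<in> set strands'" for s j d
    using that states by (auto simp: strands'_def)
  show "rot x \<in> web_darts edges' \<union> hang ` set strands'"
    if "x \<in> web_darts edges' \<union> hang ` set strands'" "\<not> allocated c x" for x
  proof -
    have "x \<in> {(Tri c, 0), (Tri c, 1), (Tri c, 2)}"
      using that old_darts(1,2) allocated_darts[of x] by (auto simp: web_darts_edges' strands'_def hang_conv)
    then show ?thesis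
      by (auto simp: web_darts_edges' strands'_def hang_conv)
  qed
qed simp

lemma gap_bound_left: "gap_bound (r, t, x) (\<not> s, nj, y) \<le> gap_bound (r, t, x) (s, j, d) + 1"
  using states by (auto simp: gap_bound_def)

lemma gap_bound_right: "gap_bound (\<not> s, nj, x) (u, t, y) \<le> gap_bound (s, j', d') (u, t, y) + 1"
  using states by (auto simp: gap_bound_def)

lemma gap_bound_closing: "5 \<le> gap_bound (s, j, d) (s, j', d')"
  using states by (auto simp: gap_bound_def)

lemma gaps_ok_edges': "gaps_ok edges' (xs @ strands' @ ys)"
proof (rule gaps_ok_replacement)
  have "gap_ok edges' (\<not> s, nj, (Tri c, 1)) ys"
  proof (rule gap_ok_cons[OF gap_ok_mono[OF matching' edges_mono old_gaps(2)]])
    show "gap_bound (\<not> s, nj, (Tri c, 1)) (hd ys) \<le> gap_bound (s, j', d') (hd ys) + 1"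
      using gap_bound_right by (cases "hd ys") auto
  qed (simp_all add: hang_conv web_darts_edges' phi_edges')
  then show "gaps_ok edges' (strands' @ ys)"
    using gaps_ok_mono[OF matching' edges_mono old_gaps(3)] by (simp add: strands'_def)
  show "gap_ok edges' (last xs) (strands' @ ys)" if "xs \<noteq> []"
  proof -
    have "gap_ok edges' (last xs) ((\<not> s, nj, (Tri c, 1)) # ys)"
    proof (rule gap_ok_snoc[OF gap_ok_mono[OF matching' edges_mono old_gaps(4)[OF that]]])
      show "gap_bound (last xs) (\<not> s, nj, (Tri c, 1)) \<le> gap_bound (last xs) (s, j, d) + 1"
        using gap_bound_left by (cases "last xs") auto
    qed (simp_all add: hang_conv web_darts_edges' phi_edges')
    then show ?thesis
      by (simp add: strands'_def)
  qed
qed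

lemma large_closed_faces_edges': "large_closed_faces edges'"
proof (rule large_closed_faces_extend[OF closed_faces edges_mono matching' finite_edges'])
  have closing: "6 \<le> face_sides (face edges' (Tri c, 0))" if "closed_face edges' (Tri c, 0)"
  proof (rule closing_face_large[OF that, where r = 0])
    show "6 \<le> gap_bound (s, j, d) (s, j', d') + tri_count (phi edges') (phi edges' (hang (s, j', d'))) (Suc 0)"
      using gap_bound_closing by (simp add: hang_conv phi_edges' tri_count_Suc)
  qed (simp_all add: hang_conv phi_edges')
  fix x assume "x \<in> web_darts edges'" "x \<notin> web_darts E" and closed: "closed_face edges' x"
  then consider "x = d" | "x = d'" | "x = (Tri c, 0)" | "x = (Tri c, 2)"
    by (auto simp: web_darts_edges')
  then show "6 \<le> face_sides (face edges' x)"
  proof cases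
    case 1
    then show ?thesis
      using closed_face_funpowD[OF closed, of "Suc 0"] fresh_darts by (simp add: phi_edges' web_darts_edges')
  next
    case 2
    then show ?thesis
      using closing closed_face_funpow[OF closed, of "Suc 0"]
        face_sides_funpow_le[OF finite_edges' closed, of "Suc 0"]
      by (simp add: phi_edges')
  next
    case 3
    then show ?thesis
      using closing closed by simp
  next
    case 4
    then show ?thesis
      using no_closed_face_into_right_gap[OF closed] by (simp add: phi_edges' hang_conv)
  qed
qed

lemma grow_inv_Y: "grow_inv (xs @ strands' @ ys) (Suc c) edges'"
  by (rule grow_inv_replacement[OF gaps_ok_edges' large_closed_faces_edges'])

end

locale Cup_replacement = grow_inv "xs @ [(s, 1, d), (s', -1, d')] @ ys" c E
  for xs s d s' d' ys c E +
  assumes signs: "s' \<noteq> s"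
begin

definition edges' :: "(dart \<times> dart) set" where
  "edges' = E \<union> {(d, (Cp c, 0)), (d', (Cp c, 1))}"

lemma old_darts:
  "allocated c d" "allocated c d'" "d \<notin> web_darts E" "d' \<notin> web_darts E" "d \<noteq> d'"
  "\<not> is_cp (fst d)" "\<not> is_cp (fst d')"
  using allocated_darts hang_unmatched distinct_hangs hang_not_cup by (auto simp: hang_conv)

lemma fresh_darts: "(Cp c, i) \<notin> web_darts E"
  "d \<noteq> (Cp c, i)" "d' \<noteq> (Cp c, i)" "(Cp c, i) \<noteq> d" "(Cp c, i) \<noteq> d'"
  using allocated_darts[of "(Cp c, i)"] old_darts(1,2) by auto

lemma partial_matching_edges': "partial_matching edges'"
proof -
  have "edges' = insert (d, (Cp c, 0)) (insert (d', (Cp c, 1)) E)"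
    by (auto simp: edges'_def)
  then show ?thesis
    by (simp only:) (intro partial_matching_insert matching; use old_darts fresh_darts in simp)
qed

lemma web_darts_edges': "web_darts edges' = web_darts E \<union> {d, d', (Cp c, 0), (Cp c, 1)}"
  by (auto simp: edges'_def)

lemma phi_edges':
  "phi edges' d = (Cp c, 1)" "phi edges' (Cp c, 0) = rot d"
  "phi edges' d' = (Cp c, 0)" "phi edges' (Cp c, 1) = rot d'"
proof -
  show "phi edges' d = (Cp c, 1)"
    using phi_edge(1)[OF partial_matching_edges', of "d" "(Cp c, 0)"] by (simp add: edges'_def)
  show "phi edges' (Cp c, 0) = rot d"
    using phi_edge(2)[OF partial_matching_edges', of "d" "(Cp c, 0)"] by (simp add: edges'_def)
  show "phi edges' d' = (Cp c, 0)"
    using phi_edge(1)[OF partial_matching_edges', of "d'" "(Cp c, 1)"] by (simp add: edges'_def)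
  show "phi edges' (Cp c, 1) = rot d'"
    using phi_edge(2)[OF partial_matching_edges', of "d'" "(Cp c, 1)"] by (simp add: edges'_def)
qed

sublocale replacement xs "(s, 1, d)" "(s', -1, d')" ys c E "[]" "Suc c" edges'
proof
  show "E \<subseteq> edges'" "finite edges'" "partial_matching edges'"
    using finite_edges partial_matching_edges' by (auto simp: edges'_def)
  show "hang (s, 1, d) \<in> web_darts edges'" "hang (s', -1, d') \<in> web_darts edges'"
    by (simp_all add: hang_conv web_darts_edges')
  show "\<not> allocated c x \<and> allocated (Suc c) x"
    if "x \<in> web_darts edges'" "x \<notin> web_darts E" "x \<noteq> hang (s, 1, d)" "x \<noteq> hang (s', -1, d')" for x
    using that by (auto simp: web_darts_edges' hang_conv)
  show "\<not> is_cp (fst x)" if "(x, y) \<in> edges'" "(x, y) \<notin> E" for x y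
    using that old_darts by (auto simp: edges'_def)
  show "rot x \<in> web_darts edges' \<union> hang ` set []"
    if "x \<in> web_darts edges' \<union> hang ` set []" "\<not> allocated c x" for x
  proof -
    have "x \<in> {(Cp c, 0), (Cp c, 1)}"
      using that old_darts(1,2) allocated_darts[of x] by (auto simp: web_darts_edges')
    then show ?thesis
      by (auto simp: web_darts_edges')
  qed
qed simp_all

lemma gap_bound_merge: "gap_bound (r, t, x) (u, w, y) \<le> gap_bound (r, t, x) (s, 1, d) + gap_bound (s', -1, d') (u, w, y)"
  using signs by (auto simp: gap_bound_def)

lemma gap_bound_closing: "6 \<le> gap_bound (s, 1, d) (s', -1, d')"
  using signs by (simp add: gap_bound_def)

lemma gaps_ok_edges': "gaps_ok edges' (xs @ ys)"
proof -
  have "gap_ok edges' (last xs) ys" if "xs \<noteq> []"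
  proof (rule gap_ok_merge[OF gap_ok_mono[OF matching' edges_mono old_gaps(4)[OF that]]
        gap_ok_mono[OF matching' edges_mono old_gaps(2)], where z = "(Cp c, 1)"])
    show "gap_bound (last xs) (hd ys) \<le> gap_bound (last xs) (s, 1, d) + gap_bound (s', -1, d') (hd ys)"
      using gap_bound_merge by (cases "last xs"; cases "hd ys") auto
  qed (simp_all add: hang_conv web_darts_edges' phi_edges')
  then show ?thesis
    using gaps_ok_replacement gaps_ok_mono[OF matching' edges_mono old_gaps(3)] by simp
qed

lemma large_closed_faces_edges': "large_closed_faces edges'"
proof (rule large_closed_faces_extend[OF closed_faces edges_mono matching' finite_edges'])
  have closing: "6 \<le> face_sides (face edges' (Cp c, 0))" if "closed_face edges' (Cp c, 0)"
  proof (rule closing_face_large[OF that, where r = 0])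
    show "6 \<le> gap_bound (s, 1, d) (s', -1, d') + tri_count (phi edges') (phi edges' (hang (s', -1, d'))) (Suc 0)"
      using gap_bound_closing by simp
  qed (simp_all add: hang_conv phi_edges')
  have right: False if "closed_face edges' (Cp c, 1)"
    using no_closed_face_into_right_gap[OF that] by (simp add: phi_edges' hang_conv)
  fix x assume "x \<in> web_darts edges'" "x \<notin> web_darts E" and closed: "closed_face edges' x"
  then consider "x = d" | "x = d'" | "x = (Cp c, 0)" | "x = (Cp c, 1)"
    by (auto simp: web_darts_edges')
  then show "6 \<le> face_sides (face edges' x)"
  proof cases
    case 1
    then show ?thesis
      using right closed_face_funpow[OF closed, of "Suc 0"] by (simp add: phi_edges')
  next
    case 2
    then show ?thesis
      using closing closed_face_funpow[OF closed, of "Suc 0"]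
        face_sides_funpow_le[OF finite_edges' closed, of "Suc 0"]
      by (simp add: phi_edges')
  next
    case 3
    then show ?thesis
      using closing closed by simp
  next
    case 4
    then show ?thesis
      using right closed by simp
  qed
qed

lemma grow_inv_Cup: "grow_inv (xs @ ys) (Suc c) edges'"
  using grow_inv_replacement[OF _ large_closed_faces_edges'] gaps_ok_edges' by simp

end

section \<open>Reachable states and the final web\<close>

lemma gaps_ok_boundary: "(\<And>a. a \<in> set L \<Longrightarrow> reaches_boundary E (rot (hang a))) \<Longrightarrow> gaps_ok E L"
  by (induction L) (simp_all add: gap_ok_def)

lemma grow_inv_init:
  assumes "set J \<subseteq> {-1, 0, 1}" "length J = length S"
  shows "grow_inv (map (\<lambda>i. (S ! i, J ! i, (Top i, 0))) [0..<length S]) 0 {}"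
proof
  let ?L = "map (\<lambda>i. (S ! i, J ! i, (Top i, 0))) [0..<length S]"
  have hangs: "hang ` set ?L = {(Top i, 0) | i. i < length S}"
    by (force simp: hang_conv)
  show "finite {}" "large_closed_faces {}"
    unfolding large_closed_faces_def closed_face_def using funpow_in_face[where k = 0] by fastforce+
  show "partial_matching {}"
    by (simp add: partial_matching_def linked_def)
  show "distinct (map hang ?L)"
    by (simp add: distinct_map inj_on_def hang_conv)
  show "gaps_ok {} ?L"
    by (intro gaps_ok_boundary reaches_boundary_refl) (auto simp: inner_vtx_def hang_conv)
  show "j \<in> {-1, 0, 1}" if strand: "(s, j, d) \<in> set ?L" for s j d
  proof -
    obtain i where "i < length J" "j = J ! i"
      using strand assms(2) by auto
    then show ?thesis
      using assms(1) nth_mem by blast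
  qed
  show "rot x \<in> web_darts {} \<union> hang ` set ?L" if "x \<in> web_darts {} \<union> hang ` set ?L" "inner_vtx (fst x)" for x
    using that unfolding hangs by (auto simp: inner_vtx_def)
qed (auto simp: hang_conv)

lemma take_nth_nth_drop:
  "Suc k < length L \<Longrightarrow> L = take k L @ [L ! k, L ! Suc k] @ drop (Suc (Suc k)) L"
  by (simp add: Cons_nth_drop_Suc)

lemma grow_step_grow_inv:
  assumes step: "grow_step (L, c, E) (L', c', E')" and inv: "grow_inv L c E"
  shows "grow_inv L' c' E'"
  using step
proof cases
  case (H k s j d s' j' d' nj nj')
  let ?xs = "take k L" and ?ys = "drop (Suc (Suc k)) L"
  have inv': "grow_inv (?xs @ [L ! k, L ! Suc k] @ ?ys) c E"
    using inv take_nth_nth_drop[of k L] H by metis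
  interpret H_replacement ?xs s j d s' j' d' ?ys c E nj nj'
    using inv' H by (intro H_replacement.intro H_replacement_axioms.intro) simp_all
  show ?thesis
    using grow_inv_H H by (simp add: strands'_def edges'_def)
next
  case (Cup k s d s' d')
  let ?xs = "take k L" and ?ys = "drop (Suc (Suc k)) L"
  have inv': "grow_inv (?xs @ [L ! k, L ! Suc k] @ ?ys) c E"
    using inv take_nth_nth_drop[of k L] Cup by metis
  interpret Cup_replacement ?xs s d s' d' ?ys c E
    using inv' Cup by (intro Cup_replacement.intro Cup_replacement_axioms.intro) simp_all
  show ?thesis
    using grow_inv_Cup Cup by (simp add: edges'_def)
next
  case (Y k s j d j' d' nj)
  let ?xs = "take k L" and ?ys = "drop (Suc (Suc k)) L"
  have inv': "grow_inv (?xs @ [L ! k, L ! Suc k] @ ?ys) c E"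
    using inv take_nth_nth_drop[of k L] Y by metis
  interpret Y_replacement ?xs s j d j' d' ?ys c E nj
    using inv' Y by (intro Y_replacement.intro Y_replacement_axioms.intro) simp_all
  show ?thesis
    using grow_inv_Y Y by (simp add: strands'_def edges'_def)
qed

lemma grow_inv_reachable:
  assumes "grow_step\<^sup>*\<^sup>* st st'" "case st of (L, c, E) \<Rightarrow> grow_inv L c E"
  shows "case st' of (L, c, E) \<Rightarrow> grow_inv L c E"
  using assms by induction (auto split: prod.splits intro: grow_step_grow_inv)

lemma boundary_arcs_not_inner:
  "(x, y) \<in> boundary_arcs n m \<Longrightarrow> \<not> inner_vtx (fst x) \<and> \<not> inner_vtx (fst y)"
  unfolding boundary_arcs_def inner_vtx_def by (auto split: if_splits)

context grow_inv
begin

lemma final_web_eq: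
  "final_web n (L, c, E) = E \<union> {(hang (L ! i), (Bot i, 0)) | i. i < length L} \<union> boundary_arcs n (length L)"
  by (simp add: final_web_def hang_def)

lemma linked_final_web:
  assumes "inner_vtx (fst x)"
  shows "linked (final_web n (L, c, E)) x y \<longleftrightarrow> linked E x y \<or> (\<exists>i<length L. x = hang (L ! i) \<and> y = (Bot i, 0))"
  using assms boundary_arcs_not_inner[of x y n] boundary_arcs_not_inner[of y x n]
  unfolding final_web_eq linked_def by (auto simp: inner_vtx_def)

lemma phi_final_web_matched:
  assumes "x \<in> web_darts E" "inner_vtx (fst x)"
  shows "phi (final_web n (L, c, E)) x = phi E x"
proof -
  have "\<not> (\<exists>i<length L. x = hang (L ! i))"
    using assms(1) hang_unmatched nth_mem by blast
  then have "linked (final_web n (L, c, E)) x = linked E x"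
    using linked_final_web[OF assms(2)] by (intro ext) blast
  then show ?thesis
    unfolding phi_def alpha_def linked_def[symmetric] by simp
qed

lemma phi_final_web_hang:
  assumes "i < length L" "inner_vtx (fst (hang (L ! i)))"
  shows "phi (final_web n (L, c, E)) (hang (L ! i)) = (Bot i, 1)"
proof -
  have "hang (L ! i) \<notin> web_darts E"
    using assms(1) hang_unmatched by auto
  moreover have "hang (L ! i) = hang (L ! i') \<longleftrightarrow> i' = i" if "i' < length L" for i'
    using distinct_hangs assms(1) that by (auto simp: nth_eq_iff_index_eq[symmetric])
  ultimately have "linked (final_web n (L, c, E)) (hang (L ! i)) = (\<lambda>y. y = (Bot i, 0))"
    using linked_final_web[OF assms(2)] web_darts_iff_linked assms(1) by (intro ext) metis
  then show ?thesis
    unfolding phi_def alpha_def linked_def[symmetric] by (simp add: rot.simps)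
qed

lemma final_web_darts_inner:
  assumes "x \<in> web_darts (final_web n (L, c, E))" "inner_vtx (fst x)"
  shows "x \<in> web_darts E \<union> hang ` set L"
proof -
  obtain y where "linked (final_web n (L, c, E)) x y"
    using assms(1) web_darts_iff_linked by blast
  then have "linked E x y \<or> (\<exists>i<length L. x = hang (L ! i))"
    using linked_final_web[OF assms(2)] by blast
  then show ?thesis
    using web_darts_iff_linked nth_mem by blast
qed

lemma no_closed_loops_final_web: "no_closed_loops (final_web n (L, c, E))"
  unfolding no_closed_loops_def
proof
  fix v assume "v \<in> fst ` web_darts (final_web n (L, c, E))"
  then obtain i where x: "(v, i) \<in> web_darts (final_web n (L, c, E))"
    by force
  show "\<exists>w. (web_adj (final_web n (L, c, E)))\<^sup>*\<^sup>* v w \<and> \<not> is_cp w"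
  proof (cases "is_cp v")
    case True
    then have "(v, i) \<in> web_darts E"
      using final_web_darts_inner[OF x] hang_not_cup by (force simp: inner_vtx_def)
    then obtain w j where edge: "((w, j), (v, i)) \<in> E"
      using cup_not_source True unfolding web_darts_def by force
    then have "web_adj (final_web n (L, c, E)) v w"
      unfolding web_adj_def final_web_eq by blast
    moreover have "\<not> is_cp w"
      using cup_not_source edge by fastforce
    ultimately show ?thesis
      by blast
  qed blast
qed

lemma final_web_face_step:
  assumes "x \<in> web_darts E \<union> hang ` set L" "inner_vtx (fst x)"
    and "inner_vtx (fst (phi (final_web n (L, c, E)) x))"
  shows "x \<in> web_darts E" "phi (final_web n (L, c, E)) x = phi E x"
    "phi E x \<in> web_darts E \<union> hang ` set L"
proof -
  show matched: "x \<in> web_darts E"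
  proof (rule ccontr)
    assume "x \<notin> web_darts E"
    then have "x \<in> hang ` set L"
      using assms(1) by blast
    then obtain i where "i < length L" "x = hang (L ! i)"
      by (metis imageE in_set_conv_nth)
    then have "phi (final_web n (L, c, E)) x = (Bot i, 1)"
      using phi_final_web_hang assms(2) by blast
    then show False
      using assms(3) by (simp add: inner_vtx_def)
  qed
  show phi: "phi (final_web n (L, c, E)) x = phi E x"
    using phi_final_web_matched matched assms(2) by blast
  obtain z where "linked E x z"
    using matched web_darts_iff_linked by blast
  then have "phi E x = rot z" "z \<in> web_darts E"
    using phi_linked[OF matching] linked_sym web_darts_iff_linked by blast+
  then show "phi E x \<in> web_darts E \<union> hang ` set L"
    using rot_attached[of z] assms(3) phi by simp
qed

lemma internal_face_final_web:
  assumes "d \<in> web_darts (final_web n (L, c, E))" "internal_face (face (final_web n (L, c, E)) d)"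
  shows "face (final_web n (L, c, E)) d = face E d" "closed_face E d"
proof -
  let ?W = "final_web n (L, c, E)"
  have inner: "inner_vtx (fst ((phi ?W ^^ k) d))" for k
    using assms(2) funpow_in_face[where k = k and E = ?W and x = d]
    unfolding internal_face_def inner_vtx_def by simp
  have iterates: "(phi ?W ^^ k) d = (phi E ^^ k) d \<and> (phi E ^^ k) d \<in> web_darts E \<union> hang ` set L" for k
  proof (induction k)
    case 0
    then show ?case
      using final_web_darts_inner[OF assms(1)] inner[of 0] by simp
  next
    case (Suc k)
    then show ?case
      using final_web_face_step(2,3)[of "(phi E ^^ k) d"] inner[of k] inner[of "Suc k"] by simp
  qed
  have matched: "(phi E ^^ k) d \<in> web_darts E" for k
    using final_web_face_step(1)[of "(phi E ^^ k) d"] iterates[of k] inner[of k] inner[of "Suc k"] by simp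
  show "face ?W d = face E d"
    unfolding face_def using iterates by simp
  then show "closed_face E d"
    using assms(2) matched unfolding closed_face_def face_def by auto
qed

lemma non_elliptic_final_web: "non_elliptic (final_web n (L, c, E))"
  unfolding non_elliptic_def
  using no_closed_loops_final_web internal_face_final_web closed_faces
  unfolding large_closed_faces_def by metis

end

theorem lemma3:
  fixes S :: "bool list" and J :: "int list" and st :: gstate
  assumes "length J = length S"
    and "set J \<subseteq> {-1, 0, 1}"
    and "grow_step\<^sup>*\<^sup>* (grow_init S J) st"
    and "grow_terminal st"
  shows "non_elliptic (final_web (length S) st)"
proof -
  obtain L c E where st: "st = (L, c, E)"
    by (cases st)
  have "grow_inv L c E"
    using grow_inv_reachable[OF assms(3)] grow_inv_init[OF assms(2,1)] st by (simp add: grow_init_def)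
  then show ?thesis
    using grow_inv.non_elliptic_final_web st by blast
qed

end
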